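(* Let $X$ be an affine pseudo-plane of type $(d,r)$ (i.e. $(d,1,r)$). Then the fundamental group at infinity $\pi_{1,\infty}(X)$ is the group generated by two elements $x,y$ subject to the relations $x^r=y^d=(xy)^d$. If $r=1$, then $\pi_{1,\infty}(X)$ is a finite cyclic group of order $d^2$.
   Context: Work over $k=\mathbb{C}$. An $\mathbb{A}^1$-fibration is a morphism $f:X\to B$ with $f^{-1}(U)\cong U\times\mathbb{A}^1$ over a non-empty open $U\subseteq B$; multiplicity of a fiber $\sum\mu_iC_i$ is $\gcd(\mu_i)$. An affine pseudo-plane is a smooth affine surface $X$ with an $\mathbb{A}^1$-fibration $\rho:X\to A\cong\mathbb{A}^1$ having exactly one multiple fiber, of multiplicity $d\ge2$. For $d\ge2,n\ge1,r\ge1$, $X$ has type $(d,n,r)$ if $X=V\setminus D$ where $V$ (with a $\mathbb{P}^1$-fibration extending $\rho$) is obtained from the Hirzebruch surface $\Sigma_n$ (minimal section $S'$, $S'^2=-n$, distinct fibers $\ell_0,\ell_\infty$) by: blowing up a point of $\ell_0$ off $S'$ ($E_1$); blowing up $E_1\cap\ell_0$ ($E_2$); for $3\le i\le d$ blowing up $E_1\cap E_{i-1}$ ($E_i$); for $d+1\le i\le d+r$ blowing up a point of $E_{i-1}$ on no other component of the total transform of $\ell_0$ ($E_i$); $D=\ell'_\infty+S'+\ell'_0+E_1+\dots+E_{d+r-1}$ (proper transforms). Equivalently the weighted dual graph of $D$ is the chain $\ell'_\infty(0)-S'(-n)-\ell'_0(-2)-E_2(-2)-\dots-E_d(-2)$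 with the chains $E_d-E_1(-d)$ and $E_d-E_{d+1}(-2)-\dots-E_{d+r-1}(-2)$ attached at $E_d$ (weights are self-intersections). Type $(d,r)$ means $(d,1,r)$. Fundamental group at infinity: if a smooth affine surface $X$ has a smooth projective compactification $V$ with $D=V\setminus X$ a simple normal crossing divisor whose weighted dual graph $\Gamma$ is a tree of smooth rational curves, $\pi_{1,\infty}(X)$ is the group $\pi_1(\Gamma)$ with one generator for each vertex, the vertices being ordered $v_1,v_2,\dots$, and relations: for each vertex $v$ of weight $w$, if $v_{i_1},\dots,v_{i_s}$ ($i_1<\dots<i_s$) are $v$ together with its neighbours and $v=v_{i_a}$, then $v_{i_1}\cdots v_{i_{a-1}}v_{i_a}^{w}v_{i_{a+1}}\cdots v_{i_s}=e$; and any two adjacent vertices commute. This group does not depend on the choices made. *)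

theory Defs
  imports "HOL-Algebra.Generated_Groups"
begin

text \<open>A word is a list of letters (g, True) = g and (g, False) = g inverse.\<close>
type_synonym 'g word = "('g \<times> bool) list"

definition inv_word :: "'g word \<Rightarrow> 'g word" where
  "inv_word w = rev (map (\<lambda>(a, b). (a, \<not> b)) w)"

definition pow_word :: "'g \<Rightarrow> int \<Rightarrow> 'g word" where
  "pow_word a k = (if 0 \<le> k then replicate (nat k) (a, True) else replicate (nat (- k)) (a, False))"

definition words_on :: "'g set \<Rightarrow> 'g word set" where
  "words_on S = {w. fst ` set w \<subseteq> S}"

text \<open>Equality in the group presented by the relators R (words equal to the identity).\<close>
inductive pres_rel :: "'g word set \<Rightarrow> 'g word \<Rightarrow> 'g word \<Rightarrow> bool" for R where
  refl: "pres_rel R w w"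
| sym: "pres_rel R u v \<Longrightarrow> pres_rel R v u"
| trans: "pres_rel R u v \<Longrightarrow> pres_rel R v w \<Longrightarrow> pres_rel R u w"
| cancel: "pres_rel R (u @ [(a, b), (a, \<not> b)] @ v) (u @ v)"
| relator: "r \<in> R \<Longrightarrow> pres_rel R (u @ r @ v) (u @ v)"

definition presented_group :: "'g set \<Rightarrow> 'g word set \<Rightarrow> ('g word set) monoid" where
  "presented_group S R =
    \<lparr> carrier = words_on S // {(u, v). u \<in> words_on S \<and> v \<in> words_on S \<and> pres_rel R u v},
      mult = (\<lambda>A B. {w \<in> words_on S. \<exists>u\<in>A. \<exists>v\<in>B. pres_rel R (u @ v) w}),
      one = {w \<in> words_on S. pres_rel R [] w} \<rparr>"

text \<open>The relation for vertex v: the product, in increasing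
  order of index, of v and its neighbours, with v raised to its weight, equals e;
  adjacent vertices commute.\<close>

definition vertex_relator :: "nat \<Rightarrow> (nat \<Rightarrow> int) \<Rightarrow> (nat \<Rightarrow> nat \<Rightarrow> bool) \<Rightarrow> nat \<Rightarrow> nat word" where
  "vertex_relator N wt adj v =
     concat (map (\<lambda>u. if u = v then pow_word v (wt v) else [(u, True)])
                 (sorted_list_of_set ({v} \<union> {u. u < N \<and> adj v u})))"

definition commutator_word :: "'g \<Rightarrow> 'g \<Rightarrow> 'g word" where
  "commutator_word a b = [(a, True), (b, True), (a, False), (b, False)]"

definition pi1_graph :: "nat \<Rightarrow> (nat \<Rightarrow> int) \<Rightarrow> (nat \<Rightarrow> nat \<Rightarrow> bool) \<Rightarrow> (nat word set) monoid" where
  "pi1_graph N wt adj = presented_group {..<N}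
     ({vertex_relator N wt adj v | v. v < N} \<union>
      {commutator_word u v | u v. u < N \<and> v < N \<and> adj u v})"

text \<open>Vertex indexing (d+r+2 vertices):
  0 = l'_inf (weight 0), 1 = S' (weight -n), 2 = l'_0 (weight -2),
  i+1 = E_i for 2 \<le> i \<le> d (weight -2), d+2 = E_1 (weight -d),
  j+2 = E_j for d+1 \<le> j \<le> d+r-1 (weight -2).
  Edges: chain 0-1-...-(d+1); (d+1)-(d+2); chain (d+1)-(d+3)-...-(d+r+1).\<close>

definition pp_nverts :: "nat \<Rightarrow> nat \<Rightarrow> nat" where
  "pp_nverts d r = d + r + 2"

definition pp_weight :: "nat \<Rightarrow> nat \<Rightarrow> nat \<Rightarrow> nat \<Rightarrow> int" where
  "pp_weight d n r i = (if i = 0 then 0 else if i = 1 then - int n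
                        else if i = d + 2 then - int d else -2)"

definition pp_edge :: "nat \<Rightarrow> nat \<Rightarrow> nat \<Rightarrow> nat \<Rightarrow> bool" where
  "pp_edge d r i j =
     ((i < d + 1 \<and> j = i + 1) \<or>
      (i = d + 1 \<and> j = d + 2) \<or>
      (2 \<le> r \<and> i = d + 1 \<and> j = d + 3) \<or>
      (d + 3 \<le> i \<and> i < d + r + 1 \<and> j = i + 1))"

definition pp_adj :: "nat \<Rightarrow> nat \<Rightarrow> nat \<Rightarrow> nat \<Rightarrow> bool" where
  "pp_adj d r i j = (pp_edge d r i j \<or> pp_edge d r j i)"

definition pi1_inf_pseudo_plane :: "nat \<Rightarrow> nat \<Rightarrow> nat \<Rightarrow> (nat word set) monoid" where
  "pi1_inf_pseudo_plane d n r = pi1_graph (pp_nverts d r) (pp_weight d n r) (pp_adj d r)"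

text \<open>The group \<langle>x, y | x^r = y^d = (xy)^d\<rangle>, with x = 0, y = 1.\<close>
definition xy_group :: "nat \<Rightarrow> nat \<Rightarrow> (nat word set) monoid" where
  "xy_group d r = presented_group {0, 1}
     { pow_word 0 (int r) @ inv_word (pow_word 1 (int d)),
       pow_word 1 (int d) @ inv_word (concat (replicate d [(0, True), (1, True)])) }"

end

theory Submission
  imports Defs "HOL-Algebra.Elementary_Groups" "HOL-Algebra.Multiplicative_Group"
begin

text \<open>The relations of \<open>\<pi>\<^sub>1(\<Gamma>)\<close> can be solved along the chains of \<open>\<Gamma>\<close>.  Put
  \<open>y = \<ell>'\<^sub>0\<close> and \<open>x = y\<inverse> E\<^sub>1\<close>.  The relations at \<open>\<ell>'\<^sub>\<infinity>, S', \<ell>'\<^sub>0, E\<^sub>2, \<dots>, E\<^bsub>d-1\<^esub>\<close>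
  force \<open>S' = 1\<close>, \<open>\<ell>'\<^sub>\<infinity> = y\<inverse>\<close> and \<open>E\<^sub>i = y\<^sup>i\<close>; along the branch
  \<open>E\<^bsub>d+1\<^esub>, \<dots>, E\<^bsub>d+r-1\<^esub>\<close> every vertex is a power of the end vertex, which the relation
  at \<open>E\<^sub>d\<close> identifies with \<open>x\<close>.  What is left are the relations \<open>x\<^sup>r = y\<^sup>d\<close> at \<open>E\<^sub>d\<close>
  and \<open>(y x)\<^sup>d = y\<^sup>d\<close> at \<open>E\<^sub>1\<close>, and the latter is conjugate to \<open>(x y)\<^sup>d = y\<^sup>d\<close>.  Conversely
  these values satisfy all relations, which yields mutually inverse homomorphisms.
  For \<open>r = 1\<close> we get \<open>x = y\<^sup>d\<close>, so \<open>y\<close> generates and \<open>y\<^bsup>d(d+1)\<^esup> = y\<^sup>d\<close>, i.e.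
  \<open>y\<^bsup>d\<^sup>2\<^esup> = 1\<close>; the homomorphism to \<open>\<int>/d\<^sup>2\<close> sending \<open>y\<close> to \<open>1\<close> shows that the order
  is exactly \<open>d\<^sup>2\<close>.\<close>

context group
begin

lemma nat_pow_commute_self: "x \<in> carrier G \<Longrightarrow> x \<otimes> x [^] (n::nat) = x [^] n \<otimes> x"
  by (metis nat_pow_Suc nat_pow_Suc2)

lemma int_pow_mult_assoc:
  "x \<in> carrier G \<Longrightarrow> c \<in> carrier G \<Longrightarrow> x [^] (i::int) \<otimes> (x [^] (j::int) \<otimes> c) = x [^] (i + j) \<otimes> c"
  by (simp add: int_pow_mult m_assoc)

lemma int_pow_commute:
  "x \<in> carrier G \<Longrightarrow> x [^] (i::int) \<otimes> x [^] (j::int) = x [^] j \<otimes> x [^] i"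
  by (simp add: add.commute flip: int_pow_mult)

lemma nat_pow_conj:
  assumes "a \<in> carrier G" "b \<in> carrier G"
  shows "(inv a \<otimes> b \<otimes> a) [^] (n::nat) = inv a \<otimes> b [^] n \<otimes> a"
proof (induction n)
  case (Suc n)
  have "(inv a \<otimes> b \<otimes> a) [^] Suc n = (inv a \<otimes> b [^] n \<otimes> a) \<otimes> (inv a \<otimes> b \<otimes> a)"
    using Suc by simp
  also have "\<dots> = inv a \<otimes> (b [^] n \<otimes> ((a \<otimes> inv a) \<otimes> (b \<otimes> a)))"
    using assms by (simp only: m_assoc m_closed inv_closed nat_pow_closed)
  also have "\<dots> = inv a \<otimes> b [^] Suc n \<otimes> a"
    using assms by (simp add: m_assoc)
  finally show ?case .
qed (use assms in simp)

lemma pow_mult_swap: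
  assumes x: "x \<in> carrier G" and y: "y \<in> carrier G"
    and pow: "(x \<otimes> y) [^] (n::nat) = x [^] (k::int)"
  shows "(y \<otimes> x) [^] n = (x \<otimes> y) [^] n"
proof -
  have conj: "y \<otimes> x = inv x \<otimes> (x \<otimes> y) \<otimes> x"
    using x y by (simp add: m_assoc[symmetric])
  have "(y \<otimes> x) [^] n = inv x \<otimes> (x \<otimes> y) [^] n \<otimes> x"
    using x y by (simp only: conj nat_pow_conj m_closed)
  also have "\<dots> = inv x \<otimes> x [^] k \<otimes> x"
    by (simp only: pow)
  also have "\<dots> = x [^] k"
  proof -
    have "x [^] k \<otimes> x = x \<otimes> x [^] k"
      using int_pow_commute[OF x, of k 1] x by simp
    then show ?thesis
      using x by (simp add: m_assoc inv_solve_left')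
  qed
  finally show ?thesis using pow by simp
qed

lemma triple_prod_one_right:
  "a \<in> carrier G \<Longrightarrow> b \<in> carrier G \<Longrightarrow> c \<in> carrier G \<Longrightarrow> a \<otimes> (b \<otimes> c) = \<one> \<Longrightarrow> c = inv b \<otimes> inv a"
  by (metis inv_equality inv_mult_group m_assoc m_closed inv_comm)

lemma triple_prod_one_left:
  "a \<in> carrier G \<Longrightarrow> b \<in> carrier G \<Longrightarrow> c \<in> carrier G \<Longrightarrow> a \<otimes> (b \<otimes> c) = \<one> \<Longrightarrow> a = inv c \<otimes> inv b"
  by (metis inv_equality inv_mult_group m_closed)

end

fun eval_word :: "('a, 'b) monoid_scheme \<Rightarrow> ('g \<Rightarrow> 'a) \<Rightarrow> 'g word \<Rightarrow> 'a" where
  "eval_word G f [] = \<one>\<^bsub>G\<^esub>"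
| "eval_word G f ((a, b) # w) = (if b then f a else inv\<^bsub>G\<^esub> (f a)) \<otimes>\<^bsub>G\<^esub> eval_word G f w"

lemma eval_word_cong: "(\<And>a. a \<in> fst ` set w \<Longrightarrow> f a = g a) \<Longrightarrow> eval_word G f w = eval_word G g w"
  by (induction w) auto

context group
begin

lemma eval_word_closed: "range f \<subseteq> carrier G \<Longrightarrow> eval_word G f w \<in> carrier G"
  by (induction w) (auto simp: image_subset_iff)

lemma eval_word_append:
  "range f \<subseteq> carrier G \<Longrightarrow> eval_word G f (u @ v) = eval_word G f u \<otimes> eval_word G f v"
  by (induction u) (auto simp: m_assoc eval_word_closed image_subset_iff)

lemma eval_word_pres_rel:
  assumes f: "range f \<subseteq> carrier G" and R: "\<forall>r\<in>R. eval_word G f r = \<one>"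
  shows "pres_rel R u v \<Longrightarrow> eval_word G f u = eval_word G f v"
proof (induction rule: pres_rel.induct)
  case (cancel u a b v)
  have "f a \<in> carrier G" using f by auto
  then show ?case using f
    by (cases b) (simp_all add: eval_word_append eval_word_closed inv_solve_left' flip: m_assoc)
next
  case (relator r u v)
  then show ?case using f R by (simp add: eval_word_append eval_word_closed)
qed auto

lemma eval_word_replicate:
  assumes "range f \<subseteq> carrier G"
  shows "eval_word G f (replicate n (a, b)) = (if b then f a else inv (f a)) [^] n"
  using assms by (induction n) (auto simp: image_subset_iff nat_pow_commute_self)

lemma eval_pow_word:
  assumes f: "range f \<subseteq> carrier G"
  shows "eval_word G f (pow_word a k) = f a [^] k"
proof (cases "0 \<le> k")
  case True
  then have "eval_word G f (pow_word a k) = f a [^] nat k"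
    using f by (simp add: pow_word_def eval_word_replicate)
  also have "\<dots> = f a [^] k"
    using True unfolding int_pow_def2 by simp
  finally show ?thesis .
next
  case False
  have fa: "f a \<in> carrier G" using f by auto
  have "eval_word G f (pow_word a k) = inv (f a) [^] nat (- k)"
    using False f by (simp add: pow_word_def eval_word_replicate)
  also have "\<dots> = inv (f a [^] nat (- k))"
    using fa by (rule nat_pow_inv)
  also have "\<dots> = f a [^] k"
    using False unfolding int_pow_def2 by simp
  finally show ?thesis .
qed

lemma eval_inv_word:
  "range f \<subseteq> carrier G \<Longrightarrow> eval_word G f (inv_word w) = inv (eval_word G f w)"
proof (induction w)
  case Nil
  then show ?case by (simp add: inv_word_def)
next
  case (Cons x w)
  obtain a b where x: "x = (a, b)" by force
  have "inv_word (x # w) = inv_word w @ [(a, \<not> b)]" by (simp add: inv_word_def x)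
  then show ?case using Cons
    by (auto simp: eval_word_append x eval_word_closed inv_mult_group image_subset_iff)
qed

lemma eval_concat_replicate:
  "range f \<subseteq> carrier G \<Longrightarrow> eval_word G f (concat (replicate n w)) = eval_word G f w [^] n"
  by (induction n) (auto simp: eval_word_append eval_word_closed nat_pow_commute_self)

lemma eval_word_in_subgroup:
  assumes "subgroup K G" "\<And>a. f a \<in> K"
  shows "eval_word G f w \<in> K"
  using assms by (induction w) (auto simp: subgroup.one_closed subgroup.m_closed subgroup.m_inv_closed)

lemma eval_commutator_word:
  assumes "range f \<subseteq> carrier G" "f a \<otimes> f b = f b \<otimes> f a"
  shows "eval_word G f (commutator_word a b) = \<one>"
proof -
  have "f a \<in> carrier G" "f b \<in> carrier G" using assms(1) by auto
  then have "eval_word G f (commutator_word a b) = f a \<otimes> f b \<otimes> inv (f b \<otimes> f a)"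
    by (simp add: commutator_word_def m_assoc inv_mult_group)
  then show ?thesis
    using assms(2) \<open>f a \<in> carrier G\<close> \<open>f b \<in> carrier G\<close> by simp
qed

end

lemma hom_eval_word:
  assumes "group G" "group H" "h \<in> hom G H" "range f \<subseteq> carrier G"
  shows "h (eval_word G f w) = eval_word H (h \<circ> f) w"
proof -
  interpret group_hom G H h using assms by (simp add: group_hom_def group_hom_axioms_def)
  show ?thesis using assms(4) by (induction w) (auto simp: G.eval_word_closed image_subset_iff)
qed

section \<open>Presented groups\<close>

lemma pres_rel_append_right: "pres_rel R u u' \<Longrightarrow> pres_rel R (u @ v) (u' @ v)"
proof (induction rule: pres_rel.induct)
  case (cancel x a b y)
  then show ?case using pres_rel.cancel[of R x a b "y @ v"] by simp
next
  case (relator r x y)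
  then show ?case using pres_rel.relator[of r R x "y @ v"] by simp
qed (auto intro: pres_rel.intros)

lemma pres_rel_append_left: "pres_rel R u u' \<Longrightarrow> pres_rel R (v @ u) (v @ u')"
proof (induction rule: pres_rel.induct)
  case (cancel x a b y)
  then show ?case using pres_rel.cancel[of R "v @ x" a b y] by simp
next
  case (relator r x y)
  then show ?case using pres_rel.relator[of r R "v @ x" y] by simp
qed (auto intro: pres_rel.intros)

lemma pres_rel_append: "pres_rel R u u' \<Longrightarrow> pres_rel R v v' \<Longrightarrow> pres_rel R (u @ v) (u' @ v')"
  by (meson pres_rel.trans pres_rel_append_left pres_rel_append_right)

lemma pres_rel_inv_word_append: "pres_rel R (inv_word u @ u) []"
proof (induction u)
  case Nil
  then show ?case by (simp add: inv_word_def pres_rel.refl)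
next
  case (Cons x u)
  obtain a b where x: "x = (a, b)" by force
  have "inv_word (x # u) @ x # u = inv_word u @ [(a, \<not> b), (a, \<not> \<not> b)] @ u"
    by (simp add: inv_word_def x)
  then have "pres_rel R (inv_word (x # u) @ x # u) (inv_word u @ u)"
    by (simp only: pres_rel.cancel)
  then show ?case using Cons pres_rel.trans by blast
qed

lemma words_on_Nil [simp]: "[] \<in> words_on S"
  by (simp add: words_on_def)

lemma words_on_Cons [simp]: "x # v \<in> words_on S \<longleftrightarrow> fst x \<in> S \<and> v \<in> words_on S"
  by (auto simp: words_on_def)

lemma words_on_append [simp]: "u @ v \<in> words_on S \<longleftrightarrow> u \<in> words_on S \<and> v \<in> words_on S"
  by (auto simp: words_on_def)

lemma words_on_inv_word [simp]: "inv_word u \<in> words_on S \<longleftrightarrow> u \<in> words_on S"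
  by (induction u) (auto simp: inv_word_def)

lemma words_on_pow_word: "a \<in> S \<Longrightarrow> pow_word a k \<in> words_on S"
  by (auto simp: pow_word_def words_on_def)

lemma words_on_concat_replicate: "w \<in> words_on S \<Longrightarrow> concat (replicate n w) \<in> words_on S"
  by (induction n) auto

definition pres_class :: "'g set \<Rightarrow> 'g word set \<Rightarrow> 'g word \<Rightarrow> 'g word set" where
  "pres_class S R w = {v \<in> words_on S. pres_rel R w v}"

lemma pres_class_eq_iff:
  assumes "u \<in> words_on S" "v \<in> words_on S"
  shows "pres_class S R u = pres_class S R v \<longleftrightarrow> pres_rel R u v"
proof
  assume "pres_class S R u = pres_class S R v"
  then have "v \<in> pres_class S R u" using assms by (auto simp: pres_class_def intro: pres_rel.refl)
  then show "pres_rel R u v" by (simp add: pres_class_def)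
next
  assume "pres_rel R u v"
  then show "pres_class S R u = pres_class S R v"
    by (auto simp: pres_class_def intro: pres_rel.trans pres_rel.sym)
qed

lemma carrier_presented_group: "carrier (presented_group S R) = pres_class S R ` words_on S"
  by (auto simp: presented_group_def quotient_def pres_class_def Image_def)

lemma one_presented_group: "\<one>\<^bsub>presented_group S R\<^esub> = pres_class S R []"
  by (simp add: presented_group_def pres_class_def)

lemma mult_presented_group:
  assumes "u \<in> words_on S" "v \<in> words_on S"
  shows "pres_class S R u \<otimes>\<^bsub>presented_group S R\<^esub> pres_class S R v = pres_class S R (u @ v)"
proof -
  have "{w \<in> words_on S. \<exists>u'\<in>pres_class S R u. \<exists>v'\<in>pres_class S R v. pres_rel R (u' @ v') w}
      = pres_class S R (u @ v)"
    using assms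
    by (auto simp: pres_class_def intro: pres_rel.trans pres_rel_append pres_rel.refl)
  then show ?thesis by (simp add: presented_group_def)
qed

lemma group_presented_group: "group (presented_group S R)"
proof (rule groupI)
  let ?P = "presented_group S R"
  fix x assume "x \<in> carrier ?P"
  then obtain u where u: "u \<in> words_on S" "x = pres_class S R u"
    by (auto simp: carrier_presented_group)
  then have "pres_class S R (inv_word u) \<otimes>\<^bsub>?P\<^esub> x = \<one>\<^bsub>?P\<^esub>"
    by (simp add: mult_presented_group one_presented_group pres_class_eq_iff pres_rel_inv_word_append)
  moreover have "pres_class S R (inv_word u) \<in> carrier ?P"
    using u by (simp add: carrier_presented_group)
  ultimately show "\<exists>y\<in>carrier ?P. y \<otimes>\<^bsub>?P\<^esub> x = \<one>\<^bsub>?P\<^esub>"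
    by blast
qed (auto simp: carrier_presented_group mult_presented_group one_presented_group)

definition pres_gen :: "'g set \<Rightarrow> 'g word set \<Rightarrow> 'g \<Rightarrow> 'g word set" where
  "pres_gen S R a = (if a \<in> S then pres_class S R [(a, True)] else pres_class S R [])"

lemma pres_gen_closed: "range (pres_gen S R) \<subseteq> carrier (presented_group S R)"
  by (auto simp: pres_gen_def carrier_presented_group)

lemma eval_pres_gen:
  "w \<in> words_on S \<Longrightarrow> eval_word (presented_group S R) (pres_gen S R) w = pres_class S R w"
proof (induction w)
  case Nil
  then show ?case by (simp add: one_presented_group)
next
  case (Cons x w)
  obtain a b where x: "x = (a, b)" by force
  interpret group "presented_group S R" by (rule group_presented_group)
  have a: "a \<in> S" "w \<in> words_on S" using Cons x by auto
  have "inv\<^bsub>presented_group S R\<^esub> (pres_class S R [(a, True)]) = pres_class S R [(a, False)]"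
  proof (rule inv_equality)
    have "pres_rel R ([] @ [(a, False), (a, \<not> False)] @ []) ([] @ [])" by (rule pres_rel.cancel)
    then show "pres_class S R [(a, False)] \<otimes>\<^bsub>presented_group S R\<^esub> pres_class S R [(a, True)]
        = \<one>\<^bsub>presented_group S R\<^esub>"
      using a by (simp add: mult_presented_group one_presented_group pres_class_eq_iff)
  qed (use a in \<open>auto simp: carrier_presented_group\<close>)
  then show ?case using Cons a
    by (cases b) (auto simp: x mult_presented_group pres_gen_def)
qed

lemma eval_relator_pres_gen:
  "r \<in> R \<Longrightarrow> r \<in> words_on S \<Longrightarrow>
    eval_word (presented_group S R) (pres_gen S R) r = \<one>\<^bsub>presented_group S R\<^esub>"
  using pres_rel.relator[of r R "[]" "[]"]
  by (simp add: eval_pres_gen one_presented_group pres_class_eq_iff)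

lemma presented_group_generated:
  assumes "subgroup K (presented_group S R)" "\<And>a. a \<in> S \<Longrightarrow> pres_gen S R a \<in> K"
  shows "carrier (presented_group S R) \<subseteq> K"
proof
  interpret group "presented_group S R" by (rule group_presented_group)
  fix A assume "A \<in> carrier (presented_group S R)"
  then obtain w where "w \<in> words_on S" "A = pres_class S R w"
    by (auto simp: carrier_presented_group)
  moreover have "pres_gen S R a \<in> K" for a
    using assms subgroup.one_closed by (fastforce simp: pres_gen_def one_presented_group)
  ultimately show "A \<in> K"
    using eval_word_in_subgroup[OF assms(1)] eval_pres_gen by metis
qed

text \<open>A class is evaluated at an arbitrary representative; by \<open>eval_word_pres_rel\<close> the choice
  does not matter once the relators evaluate to \<open>\<one>\<close>.\<close>

definition pres_lift :: "('a, 'b) monoid_scheme \<Rightarrow> ('g \<Rightarrow> 'a) \<Rightarrow> 'g word set \<Rightarrow> 'a" where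
  "pres_lift H f A = eval_word H f (SOME w. w \<in> A)"

lemma pres_lift_class:
  assumes "group H" "range f \<subseteq> carrier H" "\<forall>r\<in>R. eval_word H f r = \<one>\<^bsub>H\<^esub>" "u \<in> words_on S"
  shows "pres_lift H f (pres_class S R u) = eval_word H f u"
proof -
  have "u \<in> pres_class S R u" using assms by (simp add: pres_class_def pres_rel.refl)
  then have "(SOME w. w \<in> pres_class S R u) \<in> pres_class S R u" by (rule someI)
  then have "pres_rel R u (SOME w. w \<in> pres_class S R u)" by (simp add: pres_class_def)
  then show ?thesis using group.eval_word_pres_rel[OF assms(1-3)] by (simp add: pres_lift_def)
qed

lemma pres_lift_hom:
  assumes "group H" "range f \<subseteq> carrier H" "\<forall>r\<in>R. eval_word H f r = \<one>\<^bsub>H\<^esub>"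
  shows "pres_lift H f \<in> hom (presented_group S R) H"
  using assms
  by (auto simp: hom_def carrier_presented_group mult_presented_group pres_lift_class
      group.eval_word_closed group.eval_word_append)

lemma pres_lift_gen:
  assumes "group H" "range f \<subseteq> carrier H" "\<forall>r\<in>R. eval_word H f r = \<one>\<^bsub>H\<^esub>" "a \<in> S"
  shows "pres_lift H f (pres_gen S R a) = f a"
  using assms monoid.r_one[OF group.is_monoid[OF assms(1)]]
  by (auto simp: pres_gen_def pres_lift_class image_subset_iff)

lemma presented_group_iso:
  assumes f1: "range f1 \<subseteq> carrier (presented_group S2 R2)"
      and r1: "\<forall>r\<in>R1. eval_word (presented_group S2 R2) f1 r = \<one>\<^bsub>presented_group S2 R2\<^esub>"
      and f2: "range f2 \<subseteq> carrier (presented_group S1 R1)"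
      and r2: "\<forall>r\<in>R2. eval_word (presented_group S1 R1) f2 r = \<one>\<^bsub>presented_group S1 R1\<^esub>"
      and inv1: "\<And>a. a \<in> S1 \<Longrightarrow> pres_lift (presented_group S1 R1) f2 (f1 a) = pres_gen S1 R1 a"
      and inv2: "\<And>a. a \<in> S2 \<Longrightarrow> pres_lift (presented_group S2 R2) f1 (f2 a) = pres_gen S2 R2 a"
  shows "presented_group S1 R1 \<cong> presented_group S2 R2"
proof -
  let ?P1 = "presented_group S1 R1" and ?P2 = "presented_group S2 R2"
  let ?h = "pres_lift ?P2 f1" and ?k = "pres_lift ?P1 f2"
  have G1: "group ?P1" and G2: "group ?P2" by (rule group_presented_group)+
  have h: "?h \<in> hom ?P1 ?P2" by (rule pres_lift_hom[OF G2 f1 r1])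
  have k: "?k \<in> hom ?P2 ?P1" by (rule pres_lift_hom[OF G1 f2 r2])
  have kh: "?k (?h A) = A" if A: "A \<in> carrier ?P1" for A
  proof -
    obtain w where w: "w \<in> words_on S1" "A = pres_class S1 R1 w"
      using A unfolding carrier_presented_group by blast
    have "?k (?h A) = ?k (eval_word ?P2 f1 w)" using w pres_lift_class[OF G2 f1 r1] by simp
    also have "\<dots> = eval_word ?P1 (?k \<circ> f1) w" by (rule hom_eval_word[OF G2 G1 k f1])
    also have "\<dots> = eval_word ?P1 (pres_gen S1 R1) w"
      by (rule eval_word_cong) (use w inv1 in \<open>auto simp: words_on_def\<close>)
    also have "\<dots> = A" using w eval_pres_gen by simp
    finally show ?thesis .
  qed
  have hk: "?h (?k B) = B" if B: "B \<in> carrier ?P2" for B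
  proof -
    obtain w where w: "w \<in> words_on S2" "B = pres_class S2 R2 w"
      using B unfolding carrier_presented_group by blast
    have "?h (?k B) = ?h (eval_word ?P1 f2 w)" using w pres_lift_class[OF G1 f2 r2] by simp
    also have "\<dots> = eval_word ?P2 (?h \<circ> f2) w" by (rule hom_eval_word[OF G1 G2 h f2])
    also have "\<dots> = eval_word ?P2 (pres_gen S2 R2) w"
      by (rule eval_word_cong) (use w inv2 in \<open>auto simp: words_on_def\<close>)
    also have "\<dots> = B" using w eval_pres_gen by simp
    finally show ?thesis .
  qed
  have "bij_betw ?h (carrier ?P1) (carrier ?P2)"
    by (rule bij_betw_byWitness[where f' = ?k]) (use kh hk h k in \<open>auto simp: hom_def\<close>)
  then show ?thesis using h by (auto simp: is_iso_def iso_def)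
qed

section \<open>The boundary graph of a pseudo-plane of type \<open>(d, r)\<close>\<close>

definition pp_nbhd :: "nat \<Rightarrow> nat \<Rightarrow> nat \<Rightarrow> nat list" where
  "pp_nbhd d r v =
    (if v = 0 then [0, 1]
     else if v \<le> d then [v - 1, v, v + 1]
     else if v = d + 1 then [d, d + 1, d + 2] @ (if 2 \<le> r then [d + 3] else [])
     else if v = d + 2 then [d + 1, d + 2]
     else [if v = d + 3 then d + 1 else v - 1, v] @ (if v < d + r + 1 then [v + 1] else []))"

lemma set_pp_nbhd:
  assumes "2 \<le> d" "1 \<le> r" "v < pp_nverts d r"
  shows "set (pp_nbhd d r v) = {v} \<union> {u. u < pp_nverts d r \<and> pp_adj d r v u}"
  using assms unfolding pp_nbhd_def pp_adj_def pp_edge_def pp_nverts_def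
  by (auto split: if_splits)

lemma sorted_pp_nbhd: "sorted_wrt (<) (pp_nbhd d r v)"
  by (auto simp: pp_nbhd_def)

lemma vertex_relator_pp:
  assumes "2 \<le> d" "1 \<le> r" "v < pp_nverts d r"
  shows "vertex_relator (pp_nverts d r) wt (pp_adj d r) v =
     concat (map (\<lambda>u. if u = v then pow_word v (wt v) else [(u, True)]) (pp_nbhd d r v))"
proof -
  have "sorted_list_of_set ({v} \<union> {u. u < pp_nverts d r \<and> pp_adj d r v u}) = pp_nbhd d r v"
    unfolding set_pp_nbhd[OF assms, symmetric] sorted_list_of_set_sort_remdups
    using sorted_pp_nbhd[of d r v]
    by (simp add: strict_sorted_iff distinct_remdups_id sorted_sort_id)
  then show ?thesis by (simp add: vertex_relator_def)
qed

definition pp_relators :: "nat \<Rightarrow> nat \<Rightarrow> nat word set" where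
  "pp_relators d r =
    {vertex_relator (pp_nverts d r) (pp_weight d 1 r) (pp_adj d r) v | v. v < pp_nverts d r} \<union>
    {commutator_word u v | u v. u < pp_nverts d r \<and> v < pp_nverts d r \<and> pp_adj d r u v}"

lemma pi1_inf_pseudo_plane_presented:
  "pi1_inf_pseudo_plane d 1 r = presented_group {..<pp_nverts d r} (pp_relators d r)"
  by (simp add: pi1_inf_pseudo_plane_def pi1_graph_def pp_relators_def)

lemma pp_relators_words_on:
  assumes "2 \<le> d" "1 \<le> r"
  shows "pp_relators d r \<subseteq> words_on {..<pp_nverts d r}"
proof
  fix w assume "w \<in> pp_relators d r"
  then consider v where "v < pp_nverts d r"
      "w = vertex_relator (pp_nverts d r) (pp_weight d 1 r) (pp_adj d r) v"
    | u v where "u < pp_nverts d r" "v < pp_nverts d r" "w = commutator_word u v"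
    unfolding pp_relators_def by blast
  then show "w \<in> words_on {..<pp_nverts d r}"
  proof cases
    case 1
    then have "set (pp_nbhd d r v) \<subseteq> {..<pp_nverts d r}"
      using set_pp_nbhd[OF assms 1(1)] by auto
    then show ?thesis
      using 1 by (auto simp: vertex_relator_pp[OF assms] words_on_def pow_word_def)
  next
    case 2
    then show ?thesis by (simp add: commutator_word_def)
  qed
qed

definition pp_vertex_product ::
    "('a, 'b) monoid_scheme \<Rightarrow> nat \<Rightarrow> nat \<Rightarrow> (nat \<Rightarrow> 'a) \<Rightarrow> nat \<Rightarrow> 'a" where
  "pp_vertex_product G d r g v =
    (if v = 0 then g 1
     else if v \<le> d then
       g (v - 1) \<otimes>\<^bsub>G\<^esub> (g v [^]\<^bsub>G\<^esub> (if v = 1 then -1 else -2::int) \<otimes>\<^bsub>G\<^esub> g (v + 1))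
     else if v = d + 1 then
       g d \<otimes>\<^bsub>G\<^esub> (g (d + 1) [^]\<^bsub>G\<^esub> (-2::int) \<otimes>\<^bsub>G\<^esub>
         (g (d + 2) \<otimes>\<^bsub>G\<^esub> (if 2 \<le> r then g (d + 3) else \<one>\<^bsub>G\<^esub>)))
     else if v = d + 2 then g (d + 1) \<otimes>\<^bsub>G\<^esub> g (d + 2) [^]\<^bsub>G\<^esub> (- int d)
     else g (if v = d + 3 then d + 1 else v - 1) \<otimes>\<^bsub>G\<^esub>
       (g v [^]\<^bsub>G\<^esub> (-2::int) \<otimes>\<^bsub>G\<^esub> (if v < d + r + 1 then g (v + 1) else \<one>\<^bsub>G\<^esub>)))"

lemma (in group) eval_vertex_relator_pp:
  assumes d: "2 \<le> d" and r: "1 \<le> r" and v: "v < pp_nverts d r"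
    and g: "range g \<subseteq> carrier G"
  shows "eval_word G g (vertex_relator (pp_nverts d r) (pp_weight d 1 r) (pp_adj d r) v) =
    pp_vertex_product G d r g v"
proof -
  have gc: "g u \<in> carrier G" for u using g by auto
  have single: "eval_word G g [(u, True)] = g u" for u using gc by simp
  have opt: "eval_word G g (if P then [(u, True)] else []) = (if P then g u else \<one>)" for P u
    using single by simp
  note eval = eval_word_append[OF g] eval_pow_word[OF g] single opt gc
  note vr = vertex_relator_pp[OF d r v]
  consider "v = 0" | "1 \<le> v" "v \<le> d" | "v = d + 1" | "v = d + 2" | "d + 3 \<le> v"
    by linarith
  then show ?thesis
  proof cases
    case 1
    then show ?thesis unfolding vr by (simp add: eval pp_nbhd_def pp_weight_def pp_vertex_product_def)
  next
    case 2
    have "v - 1 \<noteq> v" using 2 by auto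
    then have "vertex_relator (pp_nverts d r) (pp_weight d 1 r) (pp_adj d r) v
        = [(v - 1, True)] @ pow_word v (pp_weight d 1 r v) @ [(v + 1, True)]"
      unfolding vr using 2 by (simp add: pp_nbhd_def)
    then show ?thesis using 2 by (simp add: eval pp_weight_def pp_vertex_product_def)
  next
    case 3
    have "vertex_relator (pp_nverts d r) (pp_weight d 1 r) (pp_adj d r) v
        = [(d, True)] @ pow_word (d + 1) (-2) @ [(d + 2, True)] @
          (if 2 \<le> r then [(d + 3, True)] else [])"
      unfolding vr using 3 d by (simp add: pp_nbhd_def pp_weight_def)
    then show ?thesis using 3 d by (simp add: eval pp_vertex_product_def)
  next
    case 4
    then show ?thesis unfolding vr using d by (simp add: pp_nbhd_def pp_weight_def eval pp_vertex_product_def)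
  next
    case 5
    have "(if v = d + 3 then d + 1 else v - 1) \<noteq> v" "v + 1 \<noteq> v" using 5 by auto
    then have "vertex_relator (pp_nverts d r) (pp_weight d 1 r) (pp_adj d r) v
        = [(if v = d + 3 then d + 1 else v - 1, True)] @ pow_word v (-2) @
          (if v < d + r + 1 then [(v + 1, True)] else [])"
      using 5 d unfolding vr pp_nbhd_def pp_weight_def by (simp del: One_nat_def)
    then show ?thesis using 5 d by (simp add: eval pp_vertex_product_def)
  qed
qed

text \<open>The solution of the relations: \<open>\<ell>'\<^sub>\<infinity> \<mapsto> y\<inverse>\<close>, \<open>S' \<mapsto> 1\<close>, \<open>\<ell>'\<^sub>0 \<mapsto> y\<close>,
  \<open>E\<^sub>i \<mapsto> y\<^sup>i\<close> for \<open>2 \<le> i \<le> d\<close>, \<open>E\<^sub>1 \<mapsto> y x\<close> and \<open>E\<^bsub>d+j\<^esub> \<mapsto> x\<^bsup>r-j\<^esup>\<close>.\<close>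

definition pp_assign :: "('a, 'b) monoid_scheme \<Rightarrow> nat \<Rightarrow> nat \<Rightarrow> 'a \<Rightarrow> 'a \<Rightarrow> nat \<Rightarrow> 'a" where
  "pp_assign G d r x y v =
    (if v \<le> d + 1 then y [^]\<^bsub>G\<^esub> (int v - 1)
     else if v = d + 2 then y \<otimes>\<^bsub>G\<^esub> x
     else if v \<le> d + r + 1 then x [^]\<^bsub>G\<^esub> (int d + int r + 2 - int v)
     else \<one>\<^bsub>G\<^esub>)"

context group
begin

lemma pp_assign_closed:
  "x \<in> carrier G \<Longrightarrow> y \<in> carrier G \<Longrightarrow> range (pp_assign G d r x y) \<subseteq> carrier G"
  by (auto simp: pp_assign_def)

lemma pp_assign_in_subgroup:
  "subgroup K G \<Longrightarrow> x \<in> K \<Longrightarrow> y \<in> K \<Longrightarrow> pp_assign G d r x y v \<in> K"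
  by (auto simp: pp_assign_def subgroup_int_pow_closed subgroup.m_closed subgroup.one_closed)

lemma hom_pp_assign:
  assumes "group H" "h \<in> hom G H" "x \<in> carrier G" "y \<in> carrier G"
  shows "h (pp_assign G d r x y v) = pp_assign H d r (h x) (h y) v"
proof -
  interpret group_hom G H h using assms by (simp add: group_hom_def group_hom_axioms_def)
  show ?thesis using assms by (auto simp: pp_assign_def hom_int_pow)
qed

end

locale xy_relations = group G for G (structure) +
  fixes d r :: nat and x y :: 'a
  assumes d: "2 \<le> d" and r: "1 \<le> r"
    and x_in_carrier [simp]: "x \<in> carrier G" and y_in_carrier [simp]: "y \<in> carrier G"
    and x_pow: "x [^] (int r) = y [^] (int d)" and xy_pow: "(x \<otimes> y) [^] (int d) = y [^] (int d)"
begin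

abbreviation F :: "nat \<Rightarrow> 'a" where "F \<equiv> pp_assign G d r x y"

lemma yx_pow: "(y \<otimes> x) [^] d = y [^] d"
proof -
  have "(x \<otimes> y) [^] d = x [^] int r"
    using x_pow xy_pow by (simp add: int_pow_int)
  then have "(y \<otimes> x) [^] d = (x \<otimes> y) [^] d"
    by (rule pow_mult_swap[OF x_in_carrier y_in_carrier])
  also have "\<dots> = y [^] d"
    using xy_pow by (simp add: int_pow_int)
  finally show ?thesis .
qed

lemma vertex_product_chain:
  assumes "1 \<le> v" "v \<le> d"
  shows "pp_vertex_product G d r F v = \<one>"
proof -
  let ?w = "if v = 1 then -1 else -2::int"
  have "F (v - 1) = y [^] (int v - 2)" "F v = y [^] (int v - 1)" "F (v + 1) = y [^] int v"
    using assms by (auto simp: pp_assign_def of_nat_diff)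
  then have "pp_vertex_product G d r F v = y [^] (int v - 2) \<otimes> (y [^] ((int v - 1) * ?w) \<otimes> y [^] int v)"
    using assms by (simp add: pp_vertex_product_def int_pow_pow)
  also have "\<dots> = y [^] (int v - 2 + ((int v - 1) * ?w + int v))"
    by (simp only: int_pow_mult[symmetric] y_in_carrier)
  also have "int v - 2 + ((int v - 1) * ?w + int v) = 0"
    by (auto simp: algebra_simps)
  finally show ?thesis by simp
qed

lemma vertex_product_E_d: "pp_vertex_product G d r F (d + 1) = \<one>"
proof -
  have last: "(if 2 \<le> r then F (d + 3) else \<one>) = x [^] (int r - 1)"
  proof (cases "2 \<le> r")
    case False
    then have "r = 1" using r by simp
    then show ?thesis by simp
  qed (simp add: pp_assign_def)
  have "pp_vertex_product G d r F (d + 1)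
      = y [^] (int d - 1) \<otimes> (y [^] (- 2 * int d) \<otimes> (y [^] (1::int) \<otimes> (x [^] (1::int) \<otimes> x [^] (int r - 1))))"
    using d by (simp add: pp_vertex_product_def last pp_assign_def int_pow_pow m_assoc mult.commute)
  also have "\<dots> = y [^] (int d - 1 + (- 2 * int d + 1)) \<otimes> x [^] (1 + (int r - 1))"
    by (simp only: int_pow_mult_assoc int_pow_mult[symmetric] int_pow_closed x_in_carrier y_in_carrier)
  also have "\<dots> = y [^] (- int d) \<otimes> y [^] int d"
    by (simp add: x_pow)
  finally show ?thesis by (simp flip: int_pow_mult)
qed

lemma vertex_product_E_1: "pp_vertex_product G d r F (d + 2) = \<one>"
  using yx_pow by (simp add: pp_vertex_product_def pp_assign_def int_pow_neg_int int_pow_int)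

lemma vertex_product_tail:
  assumes "d + 3 \<le> v" "v \<le> d + r + 1"
  shows "pp_vertex_product G d r F v = \<one>"
proof -
  let ?e = "\<lambda>k. int d + int r + k - int v"
  have "F (if v = d + 3 then d + 1 else v - 1) = x [^] ?e 3"
    using assms x_pow by (auto simp: pp_assign_def of_nat_diff algebra_simps)
  moreover have "F v = x [^] ?e 2"
    using assms by (simp add: pp_assign_def)
  moreover have "(if v < d + r + 1 then F (v + 1) else \<one>) = x [^] ?e 1"
    using assms by (auto simp: pp_assign_def algebra_simps)
  ultimately have "pp_vertex_product G d r F v = x [^] ?e 3 \<otimes> (x [^] (?e 2 * -2) \<otimes> x [^] ?e 1)"
    using assms by (simp add: pp_vertex_product_def int_pow_pow)
  also have "\<dots> = x [^] (?e 3 + (?e 2 * -2 + ?e 1))"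
    by (simp only: int_pow_mult[symmetric] x_in_carrier)
  finally show ?thesis by (simp add: algebra_simps)
qed

lemma pp_assign_vertex_product: "v \<le> d + r + 1 \<Longrightarrow> pp_vertex_product G d r F v = \<one>"
  using vertex_product_chain[of v] vertex_product_E_d vertex_product_E_1 vertex_product_tail[of v]
  by (cases "v = 0 \<or> v = d + 1 \<or> v = d + 2")
    (auto simp: pp_vertex_product_def pp_assign_def not_less_eq_eq)

lemma pp_assign_commute:
  assumes "pp_edge d r u v"
  shows "F u \<otimes> F v = F v \<otimes> F u"
proof -
  have zy: "y [^] (int d) \<otimes> y = y \<otimes> y [^] (int d)"
    using int_pow_commute[OF y_in_carrier, of "int d" 1] by simp
  have zxk: "y [^] (int d) \<otimes> x [^] (k::int) = x [^] k \<otimes> y [^] (int d)" for k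
    using int_pow_commute[OF x_in_carrier, of "int r" k] x_pow by simp
  consider "u < d + 1" "v = u + 1" | "u = d + 1" "v = d + 2" | "2 \<le> r" "u = d + 1" "v = d + 3"
    | "d + 3 \<le> u" "u < d + r + 1" "v = u + 1"
    using assms unfolding pp_edge_def by blast
  then show ?thesis
  proof cases
    case 1
    then show ?thesis by (simp add: pp_assign_def int_pow_commute)
  next
    case 2
    have "y [^] (int d) \<otimes> x = x \<otimes> y [^] (int d)"
      using zxk[of 1] by simp
    then have "y [^] (int d) \<otimes> (y \<otimes> x) = (y \<otimes> x) \<otimes> y [^] (int d)"
      using zy by (metis m_assoc int_pow_closed x_in_carrier y_in_carrier)
    then show ?thesis using 2 by (simp add: pp_assign_def)
  next
    case 3
    then show ?thesis using zxk by (simp add: pp_assign_def)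
  next
    case 4
    then show ?thesis by (simp add: pp_assign_def int_pow_commute)
  qed
qed

lemma pp_assign_relators: "\<forall>w\<in>pp_relators d r. eval_word G F w = \<one>"
proof
  fix w assume "w \<in> pp_relators d r"
  then consider v where "v < pp_nverts d r"
      "w = vertex_relator (pp_nverts d r) (pp_weight d 1 r) (pp_adj d r) v"
    | u v where "pp_adj d r u v" "w = commutator_word u v"
    unfolding pp_relators_def by blast
  then show "eval_word G F w = \<one>"
  proof cases
    case 1
    have "eval_word G F w = pp_vertex_product G d r F v"
      unfolding 1(2) by (rule eval_vertex_relator_pp[OF d r 1(1) pp_assign_closed[OF x_in_carrier y_in_carrier]])
    also have "\<dots> = \<one>"
      using 1(1) by (intro pp_assign_vertex_product) (simp add: pp_nverts_def)
    finally show ?thesis .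
  next
    case 2
    then show ?thesis
      using pp_assign_commute eval_commutator_word[OF pp_assign_closed[OF x_in_carrier y_in_carrier]]
      unfolding pp_adj_def by metis
  qed
qed

end

definition xy_relators :: "nat \<Rightarrow> nat \<Rightarrow> nat word set" where
  "xy_relators d r =
    {pow_word 0 (int r) @ inv_word (pow_word 1 (int d)),
     pow_word 1 (int d) @ inv_word (concat (replicate d [(0, True), (1, True)]))}"

lemma xy_group_presented: "xy_group d r = presented_group {0, 1} (xy_relators d r)"
  by (simp add: xy_group_def xy_relators_def)

lemma xy_relators_words_on: "xy_relators d r \<subseteq> words_on {0, 1}"
  by (auto simp: xy_relators_def words_on_pow_word intro!: words_on_concat_replicate)

lemma (in group) eval_xy_relators_iff:
  assumes f: "range f \<subseteq> carrier G"
  shows "(\<forall>w\<in>xy_relators d r. eval_word G f w = \<one>) \<longleftrightarrow>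
     f 0 [^] (int r) = f 1 [^] (int d) \<and> (f 0 \<otimes> f 1) [^] (int d) = f 1 [^] (int d)"
proof -
  have fc: "f 0 \<in> carrier G" "f 1 \<in> carrier G" using f by auto
  have quotient_one: "a \<otimes> inv b = \<one> \<longleftrightarrow> a = b" if "a \<in> carrier G" "b \<in> carrier G" for a b
    using that by (simp add: inv_solve_right')
  have "eval_word G f (pow_word 0 (int r) @ inv_word (pow_word 1 (int d)))
      = f 0 [^] (int r) \<otimes> inv (f 1 [^] (int d))"
    by (simp add: eval_word_append[OF f] eval_inv_word[OF f] eval_pow_word[OF f])
  moreover have "eval_word G f (pow_word 1 (int d) @ inv_word (concat (replicate d [(0, True), (1, True)])))
      = f 1 [^] (int d) \<otimes> inv ((f 0 \<otimes> f 1) [^] (int d))"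
    using fc by (simp add: eval_word_append[OF f] eval_inv_word[OF f] eval_pow_word[OF f]
        eval_concat_replicate[OF f] int_pow_int)
  ultimately show ?thesis
    unfolding xy_relators_def using fc by (auto simp: quotient_one)
qed

section \<open>Solving the relations of the boundary graph\<close>

locale pp_relations = group G for G (structure) +
  fixes d r :: nat and g :: "nat \<Rightarrow> 'a"
  assumes d: "2 \<le> d" and r: "1 \<le> r" and g_closed: "range g \<subseteq> carrier G"
    and relators: "\<forall>w\<in>pp_relators d r. eval_word G g w = \<one>"
begin

lemma g_in_carrier [simp]: "g v \<in> carrier G"
  using g_closed by auto

lemma vertex_product_eq_one: "v \<le> d + r + 1 \<Longrightarrow> pp_vertex_product G d r g v = \<one>"
proof -
  assume "v \<le> d + r + 1"
  then have v: "v < pp_nverts d r" by (simp add: pp_nverts_def)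
  then have "vertex_relator (pp_nverts d r) (pp_weight d 1 r) (pp_adj d r) v \<in> pp_relators d r"
    unfolding pp_relators_def by blast
  then show ?thesis
    using relators eval_vertex_relator_pp[OF d r v g_closed] by simp
qed

abbreviation Y :: 'a where "Y \<equiv> g 2"

definition X :: 'a where "X = inv Y \<otimes> g (d + 2)"

lemma X_in_carrier [simp]: "X \<in> carrier G"
  by (simp add: X_def)

lemma g_one: "g 1 = \<one>"
  using vertex_product_eq_one[of 0] by (simp add: pp_vertex_product_def)

lemma g_zero: "g 0 = inv Y"
proof -
  have "g 0 \<otimes> (g 1 [^] (-1::int) \<otimes> Y) = \<one>"
    using vertex_product_eq_one[of 1] d by (simp add: pp_vertex_product_def numeral_2_eq_2)
  then have "g 0 \<otimes> Y = \<one>" using g_one by simp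
  then show ?thesis by (simp add: inv_equality)
qed

lemma g_low_pair: "2 \<le> k \<Longrightarrow> k \<le> d + 1 \<Longrightarrow> g (k - 1) = Y [^] (int k - 2) \<and> g k = Y [^] (int k - 1)"
proof (induction k rule: nat_induct_at_least)
  case base
  then show ?case using g_one by simp
next
  case (Suc k)
  then have k: "2 \<le> k" "k \<le> d" and IH: "g (k - 1) = Y [^] (int k - 2)" "g k = Y [^] (int k - 1)"
    by auto
  have "g (k - 1) \<otimes> (g k [^] (-2::int) \<otimes> g (k + 1)) = \<one>"
    using vertex_product_eq_one[of k] k by (simp add: pp_vertex_product_def)
  then have "g (k + 1) = inv (g k [^] (-2::int)) \<otimes> inv (g (k - 1))"
    by (rule triple_prod_one_right[rotated 3]) simp_all
  also have "\<dots> = Y [^] ((int k - 1) * 2) \<otimes> Y [^] (- (int k - 2))"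
    unfolding IH by (simp add: int_pow_pow int_pow_neg[symmetric])
  also have "\<dots> = Y [^] ((int k - 1) * 2 + - (int k - 2))"
    by (simp only: int_pow_mult[symmetric] g_in_carrier)
  also have "(int k - 1) * 2 + - (int k - 2) = int (Suc k) - 1"
    by simp
  finally have "g (Suc k) = Y [^] (int (Suc k) - 1)"
    by simp
  moreover have "int (Suc k) - 2 = int k - 1"
    by simp
  ultimately show ?case
    using IH(2) by (simp only: diff_Suc_1)
qed

lemma g_low: "i \<le> d + 1 \<Longrightarrow> g i = Y [^] (int i - 1)"
proof (cases "2 \<le> i")
  case True
  then show "i \<le> d + 1 \<Longrightarrow> g i = Y [^] (int i - 1)" using g_low_pair by blast
next
  case False
  then have "i = 0 \<or> i = 1" by arith
  then show ?thesis using g_zero g_one by (auto simp: int_pow_neg)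
qed

lemma g_E1: "g (d + 2) = Y \<otimes> X"
  by (simp add: X_def m_assoc[symmetric])

lemma g_E1_pow: "g (d + 2) [^] (int d) = Y [^] (int d)"
proof -
  have "g (d + 1) \<otimes> g (d + 2) [^] (- int d) = \<one>"
    using vertex_product_eq_one[of "d + 2"] d r by (simp add: pp_vertex_product_def)
  then have "g (d + 1) = g (d + 2) [^] (int d)"
    by (simp add: int_pow_neg inv_solve_right')
  moreover have "g (d + 1) = Y [^] (int d)"
    using g_low[of "d + 1"] by simp
  ultimately show ?thesis by metis
qed

text \<open>For \<open>r \<ge> 2\<close>, \<open>tail k\<close> is the \<open>k\<close>-th vertex of the chain
  \<open>E\<^bsub>d+r-1\<^esub> - \<dots> - E\<^bsub>d+1\<^esub> - E\<^sub>d\<close>, counted from its free end.\<close>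

definition tail :: "nat \<Rightarrow> 'a" where
  "tail k = g (if k \<le> r - 2 then d + r + 1 - k else d + 1)"

lemma tail_in_carrier [simp]: "tail k \<in> carrier G"
  by (simp add: tail_def)

lemma tail_relation:
  assumes r2: "2 \<le> r" and k: "k \<le> r - 2"
  shows "tail (k + 1) \<otimes> (tail k [^] (-2::int) \<otimes> (if k = 0 then \<one> else tail (k - 1))) = \<one>"
proof -
  define v where "v = d + r + 1 - k"
  have v: "d + 3 \<le> v" "v \<le> d + r + 1" using r2 k by (auto simp: v_def)
  have "g (if v = d + 3 then d + 1 else v - 1) = tail (k + 1)"
  proof (cases "k + 1 \<le> r - 2")
    case True
    moreover have "v \<noteq> d + 3" "v - 1 = d + r + 1 - (k + 1)"
      using True by (auto simp: v_def)
    ultimately show ?thesis by (simp add: tail_def)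
  next
    case False
    moreover have "v = d + 3" using False k r2 by (simp add: v_def)
    ultimately show ?thesis by (simp add: tail_def)
  qed
  moreover have "g v = tail k"
    using k by (simp add: tail_def v_def)
  moreover have "(if v < d + r + 1 then g (v + 1) else \<one>) = (if k = 0 then \<one> else tail (k - 1))"
  proof (cases "k = 0")
    case False
    moreover have "v < d + r + 1" "v + 1 = d + r + 1 - (k - 1)" "k - 1 \<le> r - 2"
      using False k by (auto simp: v_def)
    ultimately show ?thesis by (simp add: tail_def)
  qed (simp add: v_def)
  moreover have "pp_vertex_product G d r g v = \<one>"
    using vertex_product_eq_one[OF v(2)] .
  moreover have "pp_vertex_product G d r g v = g (if v = d + 3 then d + 1 else v - 1) \<otimes>
      (g v [^] (-2::int) \<otimes> (if v < d + r + 1 then g (v + 1) else \<one>))"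
  proof -
    have "(v = 0) = False" "(v \<le> d) = False" "(v = d + 1) = False" "(v = d + 2) = False"
      using v by auto
    then show ?thesis unfolding pp_vertex_product_def by (simp only: if_False)
  qed
  ultimately show ?thesis
    by (simp only:)
qed

lemma tail_pow:
  assumes r2: "2 \<le> r"
  shows "m + 1 \<le> r - 1 \<Longrightarrow> tail m = tail 0 [^] (int m + 1) \<and> tail (m + 1) = tail 0 [^] (int m + 2)"
proof (induction m)
  case 0
  have "tail 1 \<otimes> (tail 0 [^] (-2::int) \<otimes> \<one>) = \<one>"
    using tail_relation[OF r2, of 0] by simp
  then have "tail 1 = inv (tail 0 [^] (-2::int))"
    by (simp add: inv_equality)
  then show ?case by (simp add: int_pow_neg[symmetric])
next
  case (Suc m)
  then have IH: "tail m = tail 0 [^] (int m + 1)" "tail (m + 1) = tail 0 [^] (int m + 2)"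
    by auto
  have "tail (m + 2) \<otimes> (tail (m + 1) [^] (-2::int) \<otimes> tail m) = \<one>"
    using tail_relation[OF r2, of "m + 1"] Suc.prems by simp
  then have "tail (m + 2) = inv (tail m) \<otimes> inv (tail (m + 1) [^] (-2::int))"
    by (rule triple_prod_one_left[rotated 3]) simp_all
  also have "\<dots> = tail 0 [^] (- (int m + 1)) \<otimes> tail 0 [^] ((int m + 2) * 2)"
    unfolding IH by (simp add: int_pow_pow int_pow_neg[symmetric] algebra_simps)
  also have "\<dots> = tail 0 [^] (- (int m + 1) + (int m + 2) * 2)"
    by (simp only: int_pow_mult[symmetric] tail_in_carrier)
  also have "- (int m + 1) + (int m + 2) * 2 = int (Suc m) + 2"
    by simp
  finally show ?case using IH(2) by (simp add: ac_simps)
qed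

lemma g_tail_end:
  assumes r2: "2 \<le> r"
  shows "g (d + 1) = g (d + r + 1) [^] (int r)"
    and "d + 3 \<le> v \<Longrightarrow> v \<le> d + r + 1 \<Longrightarrow> g v = g (d + r + 1) [^] (int d + int r + 2 - int v)"
proof -
  have s: "tail 0 = g (d + r + 1)" by (simp add: tail_def)
  have "tail (r - 2 + 1) = tail 0 [^] (int (r - 2) + 2)"
    using tail_pow[OF r2, of "r - 2"] r2 by simp
  moreover have "tail (r - 2 + 1) = g (d + 1)" "int (r - 2) + 2 = int r"
    using r2 by (auto simp: tail_def)
  ultimately show "g (d + 1) = g (d + r + 1) [^] (int r)"
    using s by simp
  assume v: "d + 3 \<le> v" "v \<le> d + r + 1"
  define m where "m = d + r + 1 - v"
  have "tail m = tail 0 [^] (int m + 1)"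
    using tail_pow[OF r2, of m] r2 v by (simp add: m_def)
  moreover have "m \<le> r - 2" "d + r + 1 - m = v" "int m + 1 = int d + int r + 2 - int v"
    using v by (auto simp: m_def)
  then have "tail m = g v" by (simp add: tail_def)
  ultimately show "g v = g (d + r + 1) [^] (int d + int r + 2 - int v)"
    using s \<open>int m + 1 = int d + int r + 2 - int v\<close> by simp
qed

lemma vertex_Ed_relation: "X \<otimes> (if 2 \<le> r then g (d + 3) else \<one>) = Y [^] (int d)"
proof -
  let ?c = "if 2 \<le> r then g (d + 3) else \<one>"
  have "g d \<otimes> (g (d + 1) [^] (-2::int) \<otimes> (g (d + 2) \<otimes> ?c)) = \<one>"
    using vertex_product_eq_one[of "d + 1"] by (simp add: pp_vertex_product_def)
  then have "g (d + 2) \<otimes> ?c = inv (g (d + 1) [^] (-2::int)) \<otimes> inv (g d)"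
    by (rule triple_prod_one_right[rotated 3]) simp_all
  also have "\<dots> = Y [^] (2 * int d) \<otimes> Y [^] (1 - int d)"
    using g_low[of d] g_low[of "d + 1"] by (simp add: int_pow_pow int_pow_neg[symmetric] mult.commute)
  also have "\<dots> = Y [^] (2 * int d + (1 - int d))"
    by (simp only: int_pow_mult[symmetric] g_in_carrier)
  also have "2 * int d + (1 - int d) = 1 + int d"
    by simp
  also have "Y [^] (1 + int d) = Y \<otimes> Y [^] (int d)"
    by (simp add: int_pow_mult)
  finally show ?thesis
    using g_E1 by (simp add: m_assoc)
qed

lemma X_eq_tail_end: "2 \<le> r \<Longrightarrow> X = g (d + r + 1)"
proof -
  assume r2: "2 \<le> r"
  let ?s = "g (d + r + 1)"
  have "X \<otimes> ?s [^] (int r - 1) = ?s [^] (int r)"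
    using vertex_Ed_relation r2 g_tail_end(1)[OF r2] g_tail_end(2)[OF r2, of "d + 3"] g_low[of "d + 1"]
    by simp
  then have "X = ?s [^] (int r) \<otimes> inv (?s [^] (int r - 1))"
    by (simp add: inv_solve_right)
  also have "\<dots> = ?s [^] (int r - (int r - 1))"
    by (simp only: int_pow_diff[symmetric] g_in_carrier)
  finally show ?thesis by simp
qed

lemma X_pow: "X [^] (int r) = Y [^] (int d)"
proof (cases "r = 1")
  case True
  then show ?thesis using vertex_Ed_relation by simp
next
  case False
  then have "2 \<le> r" using r by simp
  then show ?thesis using X_eq_tail_end g_tail_end(1) g_low[of "d + 1"] by simp
qed

lemma XY_pow: "(X \<otimes> Y) [^] (int d) = Y [^] (int d)"
proof -
  have "(Y \<otimes> X) [^] d = Y [^] (int d)"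
    using g_E1_pow g_E1 by (simp add: int_pow_int)
  then have "(X \<otimes> Y) [^] d = (Y \<otimes> X) [^] d"
    by (rule pow_mult_swap[OF g_in_carrier X_in_carrier])
  then show ?thesis
    using g_E1_pow g_E1 by (simp add: int_pow_int)
qed

lemma g_eq_pp_assign: "v < pp_nverts d r \<Longrightarrow> g v = pp_assign G d r X Y v"
proof -
  assume v: "v < pp_nverts d r"
  consider "v \<le> d + 1" | "v = d + 2" | "d + 3 \<le> v" by linarith
  then show ?thesis
  proof cases
    case 1
    then show ?thesis by (simp add: pp_assign_def g_low)
  next
    case 2
    then show ?thesis using g_E1 by (simp add: pp_assign_def)
  next
    case 3
    then have "2 \<le> r" "v \<le> d + r + 1" using v by (auto simp: pp_nverts_def)
    then show ?thesis
      using 3 g_tail_end(2)[OF \<open>2 \<le> r\<close> 3] X_eq_tail_end by (simp add: pp_assign_def)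
  qed
qed


lemma Y_pow_square:
  assumes "r = 1"
  shows "Y [^] (d\<^sup>2) = \<one>"
proof -
  have X: "X = Y [^] int d"
    using X_pow assms by simp
  have "Y [^] int d \<otimes> Y = Y [^] (int d + 1)"
    by (simp add: int_pow_mult)
  then have "Y [^] ((int d + 1) * int d) = Y [^] int d"
    using XY_pow unfolding X by (simp add: int_pow_pow)
  moreover have "(int d + 1) * int d = int (d\<^sup>2) + int d"
    by (simp add: algebra_simps power2_eq_square)
  ultimately have "Y [^] int (d\<^sup>2) = \<one>"
    by (simp add: int_pow_mult del: of_nat_power)
  then show ?thesis
    by (simp only: int_pow_int)
qed

lemma g_in_generate_Y:
  assumes "r = 1" "v < pp_nverts d r"
  shows "g v \<in> generate G {Y}"
proof -
  have "X = Y [^] int d"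
    using X_pow assms by simp
  then show ?thesis
    using g_eq_pp_assign[OF assms(2)]
    by (simp add: pp_assign_in_subgroup subgroup_int_pow_closed generate_is_subgroup generate.incl)
qed
end

lemma relators_hold_in_presented_group:
  "R \<subseteq> words_on S \<Longrightarrow>
    \<forall>w\<in>R. eval_word (presented_group S R) (pres_gen S R) w = \<one>\<^bsub>presented_group S R\<^esub>"
  using eval_relator_pres_gen by (metis subsetD)

lemma pp_relations_presented_group:
  assumes "2 \<le> d" "1 \<le> r"
  shows "pp_relations (presented_group {..<pp_nverts d r} (pp_relators d r)) d r
    (pres_gen {..<pp_nverts d r} (pp_relators d r))"
  by (intro pp_relations.intro pp_relations_axioms.intro group_presented_group assms
      pres_gen_closed relators_hold_in_presented_group pp_relators_words_on)

lemma xy_relations_presented_group: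
  assumes "2 \<le> d" "1 \<le> r"
  shows "xy_relations (presented_group {0, 1} (xy_relators d r)) d r
    (pres_gen {0, 1} (xy_relators d r) 0) (pres_gen {0, 1} (xy_relators d r) 1)"
proof -
  have "range (pres_gen {0, 1} (xy_relators d r)) \<subseteq> carrier (presented_group {0, 1} (xy_relators d r))"
    by (rule pres_gen_closed)
  with group.eval_xy_relators_iff[OF group_presented_group this]
  show ?thesis
    by (intro xy_relations.intro xy_relations_axioms.intro group_presented_group assms
        subsetD[OF pres_gen_closed rangeI])
      (use relators_hold_in_presented_group[OF xy_relators_words_on] in blast)+
qed

theorem pi1_inf_pseudo_plane_iso_xy_group:
  assumes d: "2 \<le> d" and r: "1 \<le> r"
  shows "pi1_inf_pseudo_plane d 1 r \<cong> xy_group d r"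
proof -
  let ?S1 = "{..<pp_nverts d r}" and ?S2 = "{0::nat, 1}"
  let ?P1 = "presented_group ?S1 (pp_relators d r)" and ?P2 = "presented_group ?S2 (xy_relators d r)"
  let ?g = "pres_gen ?S1 (pp_relators d r)"
  let ?x = "pres_gen ?S2 (xy_relators d r) 0" and ?y = "pres_gen ?S2 (xy_relators d r) 1"
  interpret P1: pp_relations ?P1 d r ?g
    by (rule pp_relations_presented_group[OF d r])
  interpret P2: xy_relations ?P2 d r ?x ?y
    by (rule xy_relations_presented_group[OF d r])
  let ?f = "\<lambda>b. if b = 0 then P1.X else P1.Y"
  have f: "range ?f \<subseteq> carrier ?P1" by auto
  have rel: "\<forall>w\<in>xy_relators d r. eval_word ?P1 ?f w = \<one>\<^bsub>?P1\<^esub>"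
    using P1.eval_xy_relators_iff[OF f] P1.X_pow P1.XY_pow by simp
  let ?h = "pres_lift ?P2 P2.F" and ?k = "pres_lift ?P1 ?f"
  note F = P2.pp_assign_closed[OF P2.x_in_carrier P2.y_in_carrier]
  interpret h: group_hom ?P1 ?P2 ?h
    by (intro group_hom.intro group_hom_axioms.intro P1.is_group P2.is_group
        pres_lift_hom[OF P2.is_group F P2.pp_assign_relators])
  have hg: "?h (?g v) = P2.F v" if "v \<in> ?S1" for v
    using pres_lift_gen[OF P2.is_group F P2.pp_assign_relators that] .
  have "?k (P2.F v) = pp_assign ?P1 d r (?k ?x) (?k ?y) v" for v
    by (rule P2.hom_pp_assign[OF P1.is_group pres_lift_hom[OF P1.is_group f rel] P2.x_in_carrier
          P2.y_in_carrier])
  moreover have "?k ?x = P1.X" "?k ?y = P1.Y"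
    using pres_lift_gen[OF P1.is_group f rel] by auto
  ultimately have inv1: "?k (P2.F v) = ?g v" if "v \<in> ?S1" for v
    using P1.g_eq_pp_assign[of v] that by simp
  have S1: "2 \<in> ?S1" "d + 2 \<in> ?S1"
    using d r by (simp_all add: pp_nverts_def)
  \<comment> \<open>\<open>One_nat_def\<close> would rewrite \<open>?S2\<close> to \<open>{0, Suc 0}\<close>, so the facts of \<open>P2\<close> would no
    longer match.\<close>
  have hY: "?h P1.Y = ?y"
    using hg[OF S1(1)] d by (simp add: pp_assign_def del: One_nat_def)
  have "?h P1.X = inv\<^bsub>?P2\<^esub> ?y \<otimes>\<^bsub>?P2\<^esub> (?y \<otimes>\<^bsub>?P2\<^esub> ?x)"
    using hY hg[OF S1(2)] unfolding P1.X_def by (simp add: pp_assign_def del: One_nat_def)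
  then have "?h P1.X = ?x"
    by (simp add: P2.m_assoc[symmetric] del: One_nat_def)
  then have inv2: "?h (?f b) = pres_gen ?S2 (xy_relators d r) b" if "b \<in> ?S2" for b
    using that hY by auto
  have "?P1 \<cong> ?P2"
    by (rule presented_group_iso[OF F P2.pp_assign_relators f rel inv1 inv2])
  then show ?thesis
    by (simp only: pi1_inf_pseudo_plane_presented xy_group_presented)
qed

lemma (in group) ord_eq_by_hom_integer_mod_group:
  assumes a: "a \<in> carrier G" and pow: "a [^] n = \<one>"
    and \<chi>: "\<chi> \<in> hom G (integer_mod_group n)" "\<chi> a = 1"
  shows "ord a = n"
proof -
  have "int (ord a) mod int n = \<chi> (a [^] ord a)"
    using hom_nat_pow[OF \<chi>(1) a is_group group_integer_mod_group] \<chi>(2) by simp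
  also have "\<dots> = 0"
    using hom_one[OF \<chi>(1) is_group group_integer_mod_group] a by simp
  finally have "int (ord a mod n) = 0"
    by (simp only: of_nat_mod)
  then have "n dvd ord a"
    by (simp only: of_nat_eq_0_iff dvd_eq_mod_eq_0)
  moreover have "ord a dvd n"
    using pow a pow_eq_id by simp
  ultimately show ?thesis
    by (rule dvd_antisym[rotated])
qed

text \<open>For \<open>r = 1\<close> the relations hold in \<open>\<int>/d\<^sup>2\<close> with \<open>x = d\<close> and \<open>y = 1\<close>,
  because \<open>d (d + 1) \<equiv> d (mod d\<^sup>2)\<close>.\<close>

lemma pp_hom_integer_mod_group:
  assumes d: "2 \<le> d" and r: "r = 1"
  shows "\<exists>\<chi> \<in> hom (presented_group {..<pp_nverts d r} (pp_relators d r)) (integer_mod_group (d\<^sup>2)).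
    \<chi> (pres_gen {..<pp_nverts d r} (pp_relators d r) 2) = 1"
proof -
  let ?Z = "integer_mod_group (d\<^sup>2)" and ?n = "int (d\<^sup>2)"
  have "int d < ?n"
    using d by (simp add: power2_eq_square)
  then have n: "int d < ?n" "1 < ?n"
    using d by linarith+
  have "int d * ((int d + 1) mod ?n) mod ?n = (?n + int d) mod ?n"
    by (simp add: mod_mult_right_eq algebra_simps power2_eq_square)
  then interpret Z: xy_relations ?Z d r "int d" 1
    using d r n
    by (intro xy_relations.intro xy_relations_axioms.intro group_integer_mod_group)
      (simp_all add: carrier_integer_mod_group int_pow_integer_mod_group mult.commute)
  note F = Z.pp_assign_closed[OF Z.x_in_carrier Z.y_in_carrier]
  have "pres_lift ?Z Z.F (pres_gen {..<pp_nverts d r} (pp_relators d r) 2) = Z.F 2"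
    using d by (intro pres_lift_gen[OF Z.is_group F Z.pp_assign_relators]) (simp add: pp_nverts_def)
  also have "\<dots> = 1"
    using n by (simp add: pp_assign_def int_pow_integer_mod_group)
  finally show ?thesis
    using pres_lift_hom[OF Z.is_group F Z.pp_assign_relators] by blast
qed

theorem pi1_inf_pseudo_plane_cyclic:
  assumes d: "2 \<le> d" and r: "r = 1"
  shows "order (pi1_inf_pseudo_plane d 1 r) = d\<^sup>2 \<and>
    (\<exists>g \<in> carrier (pi1_inf_pseudo_plane d 1 r).
      generate (pi1_inf_pseudo_plane d 1 r) {g} = carrier (pi1_inf_pseudo_plane d 1 r))"
proof -
  let ?S = "{..<pp_nverts d r}"
  let ?P = "presented_group ?S (pp_relators d r)"
  interpret P: pp_relations ?P d r "pres_gen ?S (pp_relators d r)"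
    by (rule pp_relations_presented_group) (use d r in simp_all)
  have "carrier ?P \<subseteq> generate ?P {P.Y}"
    by (intro presented_group_generated P.generate_is_subgroup P.g_in_generate_Y[OF r]) simp_all
  then have gen: "generate ?P {P.Y} = carrier ?P"
    by (simp add: P.generate_incl subset_antisym)
  obtain \<chi> where \<chi>: "\<chi> \<in> hom ?P (integer_mod_group (d\<^sup>2))" "\<chi> P.Y = 1"
    using pp_hom_integer_mod_group[OF d r] by blast
  have "P.ord P.Y = d\<^sup>2"
    by (rule P.ord_eq_by_hom_integer_mod_group[OF P.g_in_carrier P.Y_pow_square[OF r] \<chi>])
  then have "order ?P = d\<^sup>2"
    using P.generate_pow_card[of P.Y] gen by (simp add: order_def)
  then show ?thesis
    unfolding pi1_inf_pseudo_plane_presented by (intro conjI bexI[of _ P.Y] gen P.g_in_carrier)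
qed

theorem lemma1p4p9:
  fixes d r :: nat
  assumes "d \<ge> 2" and "r \<ge> 1"
  shows "pi1_inf_pseudo_plane d 1 r \<cong> xy_group d r
     \<and> (r = 1 \<longrightarrow>
          order (pi1_inf_pseudo_plane d 1 r) = d ^ 2 \<and>
          (\<exists>g \<in> carrier (pi1_inf_pseudo_plane d 1 r).
              generate (pi1_inf_pseudo_plane d 1 r) {g} = carrier (pi1_inf_pseudo_plane d 1 r)))"
  using pi1_inf_pseudo_plane_iso_xy_group[OF assms] pi1_inf_pseudo_plane_cyclic[OF assms(1)]
  by blast

end
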